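(* Let $m,n\ge 1$, let $A\in\mathbb{R}^{m\times n}$ be a nonzero matrix of rank $r$ with thin singular value decomposition $A=U_A\Sigma_A V_A^\top$ (so $U_A\in\mathbb{R}^{m\times r}$ has orthonormal columns), let $y\in\mathbb{R}^m$ be nonzero and set $\bar y=y/\|y\|_2$. Let $\mathcal{P}$ be the set of $m\times m$ permutation matrices and $$\operatorname{conv}(\mathcal{P})=\{B\in\mathbb{R}^{m\times m}: B^\top e=e,\ Be=e,\ B\ge 0\}$$ the set of $m\times m$ doubly stochastic matrices, where $e\in\mathbb{R}^m$ is the all-ones vector and $B\ge 0$ means entrywise nonnegativity. Define $f:\mathbb{R}^{m\times m}\to\mathbb{R}$ by $$f(B)=-\big\|(\bar y^\top\otimes U_A^\top)\,\mathrm{vec}(B)\big\|_2^2,$$ where $\otimes$ is the Kronecker product and $\mathrm{vec}$ stacks the columns of a matrix. If the problem $\min_{\Pi\in\mathcal{P}} f(\Pi)$ has a unique minimizer $\hat\Pi$, then $\hat\Pi$ is also the unique minimizer of $\min_{B\in\operatorname{conv}(\mathcal{P})} f(B)$.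
   Context: Notation: $\|\cdot\|_2$ is the Euclidean norm. The function $f$ satisfies $f(B)=-\bar y^\top B^\top U_AU_A^\top B\bar y$, and is concave. *)

theory Defs
  imports "HOL-Analysis.Analysis"
begin

definition kron :: "real^'q^'p \<Rightarrow> real^'t^'s \<Rightarrow> real^('q \<times> 't)^('p \<times> 's)" where
  "kron P Q = (\<chi> ik. \<chi> jl. P $ fst ik $ fst jl * Q $ snd ik $ snd jl)"

text \<open>Column stacking: entry with index (j,i) is B_ij (column j, row i), matching
  the block/within-block index convention of kron.\<close>
definition vecm :: "real^'n^'m \<Rightarrow> real^('n \<times> 'm)" where
  "vecm B = (\<chi> ji. B $ snd ji $ fst ji)"

definition rowmat :: "real^'m \<Rightarrow> real^'m^1" where
  "rowmat y = (\<chi> _ j. y $ j)"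

definition permutation_matrices :: "(real^'m^'m) set" where
  "permutation_matrices = {P. \<exists>p. p permutes (UNIV :: 'm set) \<and>
       P = (\<chi> i j. if p i = j then 1 else 0)}"

definition conv_perm :: "(real^'m^'m) set" where
  "conv_perm = {B. transpose B *v (\<chi> _. 1) = (\<chi> _. 1) \<and> B *v (\<chi> _. 1) = (\<chi> _. 1)
                  \<and> (\<forall>i j. B $ i $ j \<ge> 0)}"

definition fobj :: "real^'r^'m \<Rightarrow> real^'m \<Rightarrow> real^'m^'m \<Rightarrow> real" where
  "fobj U ybar B = - (norm (kron (rowmat ybar) (transpose U) *v vecm B))\<^sup>2"

end

theory Submission
  imports Defs
begin

(* Since f(B) = -g(B) with g(B) the squared norm of a linear image of B, g is convex. By the
   Birkhoff-von Neumann theorem the doubly stochastic matrices are the convex hull of the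
   permutation matrices, and a convex function at a convex combination of finitely many points
   is at most the combination of its values there; hence a point of the hull other than the
   vertex where g is strictly largest has a strictly smaller value of g.
   Birkhoff-von Neumann follows from Krein-Milman: if a doubly stochastic B has a fractional entry,
   every row and column containing one contains at least two, so the set F of fractional positions
   is too large for the row and column sum constraints, and some nonzero C supported on F with
   zero row and column sums exists; B +- tC are doubly stochastic for small t > 0, so B is not
   extreme. The singular value decomposition of A plays no role. *)

lemma conv_perm_iff:
  "B \<in> conv_perm \<longleftrightarrow>
     (\<forall>j. (\<Sum>i\<in>UNIV. B$i$j) = 1) \<and> (\<forall>i. (\<Sum>j\<in>UNIV. B$i$j) = 1) \<and> (\<forall>i j. 0 \<le> B$i$j)"
  by (simp add: conv_perm_def vec_eq_iff matrix_vector_mult_def transpose_def)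

lemma conv_perm_entry_le_one:
  assumes "B \<in> conv_perm" shows "B$i$j \<le> 1"
proof -
  have "B$i$j \<le> (\<Sum>j\<in>UNIV. B$i$j)"
    by (rule member_le_sum) (use assms in \<open>auto simp: conv_perm_iff\<close>)
  with assms show ?thesis by (simp add: conv_perm_iff)
qed

lemma permutation_matrices_subset_conv_perm: "permutation_matrices \<subseteq> conv_perm"
proof
  fix P :: "real^'m^'m" assume "P \<in> permutation_matrices"
  then obtain p where p: "p permutes UNIV" and P: "P = (\<chi> i j. if p i = j then 1 else 0)"
    unfolding permutation_matrices_def by blast
  have "{i. p i = j} = {inv p j}" for j
    using p by (auto simp: permutes_inverses)
  then show "P \<in> conv_perm"
    unfolding conv_perm_iff P by (simp add: sum.If_cases)
qed

lemma finite_permutation_matrices: "finite (permutation_matrices :: (real^'m^'m) set)"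
proof -
  have "permutation_matrices =
      (\<lambda>p. (\<chi> i j. if p i = j then 1 else 0) :: real^'m^'m) ` {p. p permutes UNIV}"
    unfolding permutation_matrices_def by auto
  also have "finite \<dots>" by (simp add: finite_permutations)
  finally show ?thesis .
qed

lemma convex_conv_perm: "convex conv_perm"
  by (rule convexI) (simp add: conv_perm_iff sum.distrib flip: sum_distrib_left)

lemma compact_conv_perm: "compact (conv_perm :: (real^'m^'m) set)"
proof -
  have "conv_perm = {B :: real^'m^'m. (\<forall>j. (\<Sum>i\<in>UNIV. B$i$j) = 1) \<and>
      (\<forall>i. (\<Sum>j\<in>UNIV. B$i$j) = 1) \<and> (\<forall>i j. 0 \<le> B$i$j)}"
    by (auto simp: conv_perm_iff)
  moreover have "closed \<dots>"
    by (intro closed_Collect_conj closed_Collect_all closed_Collect_eq closed_Collect_le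
        continuous_intros)
  ultimately have "closed (conv_perm :: (real^'m^'m) set)" by simp
  moreover have "norm B \<le> CARD('m)" if B: "B \<in> conv_perm" for B :: "real^'m^'m"
  proof -
    have "norm (B$i) \<le> 1" for i
    proof -
      have "norm (B$i) \<le> (\<Sum>j\<in>UNIV. \<bar>B$i$j\<bar>)" by (rule norm_le_l1_cart)
      also have "\<dots> = 1" using B by (simp add: conv_perm_iff)
      finally show ?thesis .
    qed
    then have "(\<Sum>i\<in>UNIV. norm (B$i)) \<le> CARD('m)"
      using sum_mono[of UNIV "\<lambda>i. norm (B$i)" "\<lambda>_. 1"] by simp
    moreover have "norm B \<le> (\<Sum>i\<in>UNIV. norm (B$i))"
      unfolding norm_vec_def by (rule L2_set_le_sum) simp
    ultimately show ?thesis by linarith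
  qed
  then have "bounded (conv_perm :: (real^'m^'m) set)"
    unfolding bounded_iff by blast
  ultimately show ?thesis by (simp add: compact_eq_bounded_closed)
qed

lemma ex1_eq_one_if_zero_one_sum_one:
  fixes f :: "'a::finite \<Rightarrow> real"
  assumes "\<forall>x. f x = 0 \<or> f x = 1" and "sum f UNIV = 1"
  shows "\<exists>!x. f x = 1"
proof -
  have "sum f UNIV = (\<Sum>x\<in>UNIV. if f x = 1 then 1 else 0)"
    by (rule sum.cong) (use assms(1) in auto)
  also have "\<dots> = card {x. f x = 1}" by (simp add: sum.If_cases)
  finally have "sum f UNIV = card {x. f x = 1}" .
  then have "card {x. f x = 1} = Suc 0" using assms(2) by simp
  then obtain x0 where "{x. f x = 1} = {x0}" by (auto simp: card_1_singleton_iff)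
  then show ?thesis by (auto simp: set_eq_iff)
qed

lemma conv_perm_zero_one_in_permutation_matrices:
  fixes B :: "real^'m^'m"
  assumes B: "B \<in> conv_perm" and zero_one: "\<forall>i j. B$i$j = 0 \<or> B$i$j = 1"
  shows "B \<in> permutation_matrices"
proof -
  have row: "\<exists>!j. B$i$j = 1" for i
    using ex1_eq_one_if_zero_one_sum_one[of "\<lambda>j. B$i$j"] B zero_one by (simp add: conv_perm_iff)
  have col: "\<exists>!i. B$i$j = 1" for j
    using ex1_eq_one_if_zero_one_sum_one[of "\<lambda>i. B$i$j"] B zero_one by (simp add: conv_perm_iff)
  define p where "p i = (THE j. B$i$j = 1)" for i
  have p_eq: "p i = j \<longleftrightarrow> B$i$j = 1" for i j
    using theI'[OF row[of i]] row[of i] unfolding p_def by blast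
  have "p permutes UNIV" unfolding permutes_univ using col p_eq by simp
  moreover have "B = (\<chi> i j. if p i = j then 1 else 0)"
    using zero_one p_eq by (auto simp: vec_eq_iff)
  ultimately show ?thesis unfolding permutation_matrices_def by blast
qed

lemma sum_eq_1_fractional_imp_other_fractional:
  fixes f :: "'a::finite \<Rightarrow> real"
  assumes "\<forall>x. 0 \<le> f x" "sum f UNIV = 1" "0 < f a" "f a < 1"
  shows "\<exists>b. b \<noteq> a \<and> 0 < f b \<and> f b < 1"
proof -
  have rest: "sum f (UNIV - {a}) = 1 - f a"
    using assms(2) sum.remove[of UNIV a f] by simp
  then obtain b where b: "b \<noteq> a" "0 < f b"
    using assms(1,4) sum_nonneg_eq_0_iff[of "UNIV - {a}" f] by (force simp: order_less_le)
  have "f b \<le> sum f (UNIV - {a})" by (rule member_le_sum) (use b assms(1) in auto)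
  with b rest assms(3) show ?thesis by auto
qed

lemma double_card_fst_image_le_card:
  fixes F :: "('a \<times> 'b) set"
  assumes "finite F" and two: "\<forall>(a,b)\<in>F. \<exists>b'. b' \<noteq> b \<and> (a,b') \<in> F"
  shows "2 * card (fst ` F) \<le> card F"
proof -
  define fibre where "fibre a = {b. (a,b) \<in> F}" for a
  have "fibre a \<subseteq> snd ` F" for a unfolding fibre_def by force
  then have fin: "finite (fibre a)" for a using assms(1) by (meson finite_imageI finite_subset)
  have "F = Sigma (fst ` F) fibre" unfolding fibre_def by force
  also have "card \<dots> = (\<Sum>a\<in>fst ` F. card (fibre a))"
    using assms(1) fin by (simp add: card_SigmaI)
  finally have card_F: "card F = (\<Sum>a\<in>fst ` F. card (fibre a))" .
  have "2 \<le> card (fibre a)" if a: "a \<in> fst ` F" for a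
  proof -
    obtain b where b: "(a,b) \<in> F" using a by force
    then obtain b' where "b' \<noteq> b" "(a,b') \<in> F" using two by blast
    with b have "{b,b'} \<subseteq> fibre a" "card {b,b'} = 2" unfolding fibre_def by auto
    then show ?thesis by (metis card_mono fin)
  qed
  then have "(\<Sum>a\<in>fst ` F. 2) \<le> card F" unfolding card_F by (rule sum_mono)
  then show ?thesis by simp
qed

lemma dim_vectors_supported_on: "dim {v :: real^'n. \<forall>i. i \<notin> X \<longrightarrow> v$i = 0} = card X"
  using dim_substandard_cart[where 'a=real and d=X] by (simp add: dim_vec_eq)

lemma subspace_vectors_supported_on: "subspace {v :: real^'n. \<forall>i. i \<notin> X \<longrightarrow> v$i = 0}"
  by (auto simp: subspace_def)

lemma dim_matrices_supported_on:
  "dim {C :: real^'n^'m. \<forall>i j. (i,j) \<notin> F \<longrightarrow> C$i$j = 0} = card F"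
proof -
  define E where "E = (\<lambda>(i,j). axis i (axis j 1) :: real^'n^'m)"
  have "inj E" by (auto simp: E_def inj_def axis_eq_axis)
  then have E_mem: "axis i (axis j 1) \<in> E ` F \<longleftrightarrow> (i,j) \<in> F" for i j
    using inj_image_mem_iff[OF \<open>inj E\<close>, of "(i,j)" F] by (simp add: E_def)
  have "{C :: real^'n^'m. \<forall>i j. (i,j) \<notin> F \<longrightarrow> C$i$j = 0} =
      {C. \<forall>b\<in>Basis. b \<notin> E ` F \<longrightarrow> C \<bullet> b = 0}"
    by (auto simp: Basis_vec_def inner_axis E_mem)
  moreover have "E ` F \<subseteq> Basis" by (auto simp: E_def Basis_vec_def)
  ultimately show ?thesis
    using \<open>inj E\<close> by (simp add: dim_substandard card_image inj_on_subset)
qed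

lemma linear_nonzero_kernel:
  fixes h :: "'a::euclidean_space \<Rightarrow> 'b::euclidean_space"
  assumes h: "linear h" and S: "subspace S" and "h ` S \<subseteq> W" and "dim W < dim S"
  shows "\<exists>x\<in>S. x \<noteq> 0 \<and> h x = 0"
proof -
  have "dim (h ` S) \<le> dim W" using assms(3) by (rule dim_subset)
  moreover have "dim (h ` S) = dim S" if "inj_on h S"
    using dim_image_eq[OF h, of S] that by (simp add: span_eq_iff[THEN iffD2, OF S])
  ultimately have "\<not> inj_on h S" using assms(4) by linarith
  then show ?thesis using linear_inj_on_iff_eq_0[OF h S] by blast
qed

lemma column_sum_eq_0_if_others:
  fixes C :: "real^'n^'m"
  assumes "\<forall>i. (\<Sum>j\<in>UNIV. C$i$j) = 0" and "\<forall>j. j \<noteq> j0 \<longrightarrow> (\<Sum>i\<in>UNIV. C$i$j) = 0"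
  shows "(\<Sum>i\<in>UNIV. C$i$j0) = 0"
proof -
  have "(\<Sum>j\<in>UNIV. \<Sum>i\<in>UNIV. C$i$j) = 0"
    using assms(1) by (subst sum.swap) simp
  moreover have "(\<Sum>j\<in>UNIV. \<Sum>i\<in>UNIV. C$i$j) = (\<Sum>i\<in>UNIV. C$i$j0)"
    using assms(2) by (subst sum.remove[of UNIV j0]) auto
  ultimately show ?thesis by simp
qed

lemma card_fst_image_add_card_snd_image_le:
  fixes F :: "('a \<times> 'b) set"
  assumes "finite F"
    and "\<forall>(i,j)\<in>F. \<exists>j'. j' \<noteq> j \<and> (i,j') \<in> F"
    and "\<forall>(i,j)\<in>F. \<exists>i'. i' \<noteq> i \<and> (i',j) \<in> F"
  shows "card (fst ` F) + card (snd ` F) \<le> card F"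
proof -
  have "2 * card (fst ` F) \<le> card F" using assms(1,2) by (rule double_card_fst_image_le_card)
  moreover have "2 * card (fst ` prod.swap ` F) \<le> card (prod.swap ` F)"
    using assms(1,3) by (intro double_card_fst_image_le_card) auto
  moreover have "fst ` prod.swap ` F = snd ` F" by force
  moreover have "card (prod.swap ` F) = card F" by (rule card_image) (metis inj_onI swap_swap)
  ultimately show ?thesis by simp
qed

lemma exists_zero_margins_matrix_supported_on:
  fixes F :: "('m::finite \<times> 'n::finite) set"
  assumes "F \<noteq> {}"
    and in_row: "\<forall>(i,j)\<in>F. \<exists>j'. j' \<noteq> j \<and> (i,j') \<in> F"
    and in_col: "\<forall>(i,j)\<in>F. \<exists>i'. i' \<noteq> i \<and> (i',j) \<in> F"
  obtains C :: "real^'n^'m" where "C \<noteq> 0" "\<forall>i j. (i,j) \<notin> F \<longrightarrow> C$i$j = 0"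
    "\<forall>i. (\<Sum>j\<in>UNIV. C$i$j) = 0" "\<forall>j. (\<Sum>i\<in>UNIV. C$i$j) = 0"
proof -
  define R where "R = fst ` F"
  define K where "K = snd ` F"
  obtain j0 where j0: "j0 \<in> K" using assms(1) unfolding K_def by blast
  have "finite F" by simp
  then have "card R + card K \<le> card F"
    unfolding R_def K_def using in_row in_col by (rule card_fst_image_add_card_snd_image_le)
  moreover have "card (K - {j0}) = card K - 1" using j0 by simp
  moreover have "card K > 0" using j0 by (auto simp: card_gt_0_iff)
  ultimately have dim_less: "card R + card (K - {j0}) < card F" by linarith
  define S where "S = {C :: real^'n^'m. \<forall>i j. (i,j) \<notin> F \<longrightarrow> C$i$j = 0}"
  have zero_row: "C$i$j = 0" if "C \<in> S" "i \<notin> R" for C i j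
  proof -
    have "(i,j) \<notin> F" using that(2) unfolding R_def by force
    with that(1) show ?thesis unfolding S_def by blast
  qed
  have zero_col: "C$i$j = 0" if "C \<in> S" "j \<notin> K" for C i j
  proof -
    have "(i,j) \<notin> F" using that(2) unfolding K_def by force
    with that(1) show ?thesis unfolding S_def by blast
  qed
  \<comment> \<open>The column sum at j0 is left out: it is implied by the other margins, and dropping it
    is what makes the target space smaller than S.\<close>
  define h where "h C = ((\<chi> i. \<Sum>j\<in>UNIV. C$i$j) :: real^'m,
    (\<chi> j. if j = j0 then 0 else \<Sum>i\<in>UNIV. C$i$j) :: real^'n)" for C :: "real^'n^'m"
  have "\<exists>C\<in>S. C \<noteq> 0 \<and> h C = 0"
  proof (rule linear_nonzero_kernel)
    show "linear h" by (rule linearI) (auto simp: h_def vec_eq_iff sum.distrib sum_distrib_left)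
    show "subspace S" by (auto simp: S_def subspace_def)
    show "h ` S \<subseteq> {v. \<forall>i. i \<notin> R \<longrightarrow> v$i = 0} \<times> {v. \<forall>j. j \<notin> K - {j0} \<longrightarrow> v$j = 0}"
      by (auto simp: h_def zero_row zero_col)
    have "dim ({v :: real^'m. \<forall>i. i \<notin> R \<longrightarrow> v$i = 0} \<times>
        {v :: real^'n. \<forall>j. j \<notin> K - {j0} \<longrightarrow> v$j = 0}) = card R + card (K - {j0})"
      by (simp only: dim_Times[OF subspace_vectors_supported_on subspace_vectors_supported_on]
          dim_vectors_supported_on)
    also have "\<dots> < dim S" unfolding S_def dim_matrices_supported_on by (rule dim_less)
    finally show "dim ({v :: real^'m. \<forall>i. i \<notin> R \<longrightarrow> v$i = 0} \<times>
        {v :: real^'n. \<forall>j. j \<notin> K - {j0} \<longrightarrow> v$j = 0}) < dim S" .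
  qed
  then obtain C where C: "C \<noteq> 0" "h C = 0" and supp: "\<forall>i j. (i,j) \<notin> F \<longrightarrow> C$i$j = 0"
    unfolding S_def by blast
  from C(2) have rows: "\<forall>i. (\<Sum>j\<in>UNIV. C$i$j) = 0"
    and col_sums: "\<forall>j. (if j = j0 then 0 else \<Sum>i\<in>UNIV. C$i$j) = 0"
    by (simp_all add: h_def zero_prod_def vec_eq_iff)
  have cols: "\<forall>j. j \<noteq> j0 \<longrightarrow> (\<Sum>i\<in>UNIV. C$i$j) = 0"
  proof (intro allI impI)
    fix j assume "j \<noteq> j0"
    with col_sums[rule_format, of j] show "(\<Sum>i\<in>UNIV. C$i$j) = 0" by simp
  qed
  moreover have "(\<Sum>i\<in>UNIV. C$i$j0) = 0" using rows cols by (rule column_sum_eq_0_if_others)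
  ultimately have "\<forall>j. (\<Sum>i\<in>UNIV. C$i$j) = 0" by metis
  with C(1) supp rows show thesis by (rule that)
qed

lemma extreme_point_of_add_diff_imp_eq_0:
  assumes "x extreme_point_of S" and "x + d \<in> S" and "x - d \<in> S"
  shows "d = 0"
proof (rule ccontr)
  assume "d \<noteq> 0"
  then have "x - d \<noteq> x + d"
    by (simp add: algebra_simps flip: scaleR_2)
  then have "midpoint (x - d) (x + d) \<in> open_segment (x - d) (x + d)" by simp
  moreover have "midpoint (x - d) (x + d) = x"
    by (simp add: midpoint_def flip: scaleR_2)
  ultimately have "x \<in> open_segment (x - d) (x + d)" by simp
  with assms show False unfolding extreme_point_of_def by blast
qed

lemma conv_perm_add_zero_margins:
  assumes "B \<in> conv_perm" and "\<forall>i. (\<Sum>j\<in>UNIV. C$i$j) = 0" and "\<forall>j. (\<Sum>i\<in>UNIV. C$i$j) = 0"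
    and "\<forall>i j. \<bar>C$i$j\<bar> \<le> B$i$j"
  shows "B + C \<in> conv_perm"
proof -
  have "0 \<le> B$i$j + C$i$j" for i j
    using abs_le_D2[of "C$i$j" "B$i$j"] assms(4) by force
  with assms(1-3) show ?thesis by (simp add: conv_perm_iff sum.distrib)
qed

lemma exists_pos_scaled_abs_le:
  fixes B C :: "real^'n^'m"
  assumes "\<forall>i j. 0 \<le> B$i$j" and "\<forall>i j. B$i$j = 0 \<longrightarrow> C$i$j = 0"
  obtains t where "0 < t" and "\<forall>i j. \<bar>t * C$i$j\<bar> \<le> B$i$j"
proof -
  have "\<forall>\<^sub>F t in at_right 0. \<bar>t * C$i$j\<bar> \<le> B$i$j" for i j
  proof (cases "B$i$j = 0")
    case True
    then show ?thesis using assms(2) by simp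
  next
    case False
    then have "0 < B$i$j" using assms(1) by (simp add: order_less_le)
    moreover have "((\<lambda>t. \<bar>t * C$i$j\<bar>) \<longlongrightarrow> \<bar>0 * C$i$j\<bar>) (at_right 0)"
      by (intro tendsto_intros)
    ultimately have "\<forall>\<^sub>F t in at_right 0. \<bar>t * C$i$j\<bar> < B$i$j"
      by (simp add: order_tendstoD(2))
    then show ?thesis by (rule eventually_mono) simp
  qed
  then have "\<forall>\<^sub>F t in at_right 0. 0 < t \<and> (\<forall>i j. \<bar>t * C$i$j\<bar> \<le> B$i$j)"
    by (intro eventually_conj eventually_at_right_less eventually_all_finite)
  then obtain t where "0 < t \<and> (\<forall>i j. \<bar>t * C$i$j\<bar> \<le> B$i$j)"
    using eventually_happens'[OF trivial_limit_at_right_real] by blast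
  then show ?thesis using that by blast
qed

lemma extreme_point_of_conv_perm_in_permutation_matrices:
  assumes "B extreme_point_of conv_perm"
  shows "B \<in> permutation_matrices"
proof -
  have B: "B \<in> conv_perm" using assms by (simp add: extreme_point_of_def)
  then have nonneg: "\<forall>i j. 0 \<le> B$i$j" by (simp add: conv_perm_iff)
  define F where "F = {(i,j). 0 < B$i$j \<and> B$i$j < 1}"
  have "F = {}"
  proof (rule ccontr)
    assume "F \<noteq> {}"
    moreover have "\<forall>(i,j)\<in>F. \<exists>j'. j' \<noteq> j \<and> (i,j') \<in> F"
      using sum_eq_1_fractional_imp_other_fractional[of "\<lambda>j. B$_$j"] B
      by (auto simp: F_def conv_perm_iff)
    moreover have "\<forall>(i,j)\<in>F. \<exists>i'. i' \<noteq> i \<and> (i',j) \<in> F"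
      using sum_eq_1_fractional_imp_other_fractional[of "\<lambda>i. B$i$_"] B
      by (auto simp: F_def conv_perm_iff)
    ultimately obtain C :: "real^'a^'a"
      where C: "C \<noteq> 0" "\<forall>i j. (i,j) \<notin> F \<longrightarrow> C$i$j = 0" and margins: "\<forall>i. (\<Sum>j\<in>UNIV. C$i$j) = 0" "\<forall>j. (\<Sum>i\<in>UNIV. C$i$j) = 0"
      by (rule exists_zero_margins_matrix_supported_on)
    obtain t where t: "0 < t" "\<forall>i j. \<bar>t * C$i$j\<bar> \<le> B$i$j"
      using exists_pos_scaled_abs_le[OF nonneg, of C] C(2) by (auto simp: F_def)
    have "B + s *\<^sub>R C \<in> conv_perm" if "\<bar>s\<bar> = t" for s
      using B margins t(2) that
      by (intro conv_perm_add_zero_margins) (simp_all add: abs_mult flip: sum_distrib_left)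
    from this[of t] this[of "-t"] t(1)
    have "B + t *\<^sub>R C \<in> conv_perm" "B - t *\<^sub>R C \<in> conv_perm" by simp_all
    then have "t *\<^sub>R C = 0" by (rule extreme_point_of_add_diff_imp_eq_0[OF assms])
    with t(1) C(1) show False by simp
  qed
  then have "\<forall>i j. B$i$j = 0 \<or> B$i$j = 1"
    using nonneg conv_perm_entry_le_one[OF B] by (force simp: F_def order_less_le)
  with B show ?thesis by (rule conv_perm_zero_one_in_permutation_matrices)
qed

theorem conv_perm_eq_convex_hull_permutation_matrices:
  "(conv_perm :: (real^'m^'m) set) = convex hull permutation_matrices" (is "?D = ?H")
proof
  have "conv_perm \<subseteq> convex hull {B :: real^'m^'m. B extreme_point_of conv_perm}"
    using Krein_Milman_Minkowski[OF compact_conv_perm convex_conv_perm] by blast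
  also have "\<dots> \<subseteq> convex hull permutation_matrices"
    by (intro hull_mono subsetI) (simp add: extreme_point_of_conv_perm_in_permutation_matrices)
  finally show "?D \<subseteq> ?H" .
  show "?H \<subseteq> ?D"
    by (rule hull_minimal) (simp_all add: permutation_matrices_subset_conv_perm convex_conv_perm)
qed

lemma convex_on_power2_norm_linear:
  fixes l :: "'a::real_vector \<Rightarrow> 'b::real_inner"
  assumes "linear l"
  shows "convex_on UNIV (\<lambda>x. (norm (l x))\<^sup>2)"
proof (rule convex_onI)
  fix t :: real and x y :: 'a
  assume t: "0 < t" "t < 1"
  let ?a = "l x" and ?b = "l y"
  have "(1 - t) * (norm ?a)\<^sup>2 + t * (norm ?b)\<^sup>2 - (norm ((1 - t) *\<^sub>R ?a + t *\<^sub>R ?b))\<^sup>2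
      = t * (1 - t) * (norm (?a - ?b))\<^sup>2"
    by (simp add: power2_norm_eq_inner inner_add_left inner_add_right inner_diff_left
        inner_diff_right inner_commute[of ?b ?a] algebra_simps)
  moreover have "0 \<le> t * (1 - t) * (norm (?a - ?b))\<^sup>2" using t by simp
  ultimately show "(norm (l ((1 - t) *\<^sub>R x + t *\<^sub>R y)))\<^sup>2
      \<le> (1 - t) * (norm ?a)\<^sup>2 + t * (norm ?b)\<^sup>2"
    using linear_add[OF assms] linear_scale[OF assms] by simp
qed simp

lemma linear_vecm: "linear vecm"
  by (rule linearI) (simp_all add: vecm_def vec_eq_iff)

lemma convex_on_convex_hull_less_unique_max:
  fixes g :: "'a::real_vector \<Rightarrow> real"
  assumes P: "finite P" and g: "convex_on (convex hull P) g" and p: "p \<in> P"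
    and less: "\<forall>q\<in>P. q \<noteq> p \<longrightarrow> g q < g p"
    and x: "x \<in> convex hull P" "x \<noteq> p"
  shows "g x < g p"
proof -
  obtain u where u: "\<forall>q\<in>P. 0 \<le> u q" "sum u P = 1" "(\<Sum>q\<in>P. u q *\<^sub>R q) = x"
    using x(1) convex_hull_finite[OF P] by blast
  have "g x \<le> (\<Sum>q\<in>P. u q * g q)"
    using convex_on_sum[OF P _ g u(2), of id] u(1,3) p by (auto intro: hull_inc)
  moreover obtain q where q: "q \<in> P" "q \<noteq> p" "0 < u q"
  proof (rule ccontr)
    assume "\<not> thesis"
    then have zero: "\<forall>q\<in>P - {p}. u q = 0" using u(1) that by force
    then have "u p = 1" using u(2) sum.remove[OF P p, of u] by simp
    moreover have "x = u p *\<^sub>R p"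
      using u(3) zero sum.remove[OF P p, of "\<lambda>q. u q *\<^sub>R q"] by simp
    ultimately show False using x(2) by simp
  qed
  then have "(\<Sum>q\<in>P. u q * g q) < (\<Sum>q\<in>P. u q * g p)"
    using u(1) less
    by (intro sum_strict_mono_ex1[OF P]) (auto intro!: mult_left_mono bexI[of _ q])
  moreover have "(\<Sum>q\<in>P. u q * g p) = g p" using u(2) by (simp flip: sum_distrib_right)
  ultimately show ?thesis by linarith
qed

theorem proposition1:
  fixes A :: "real^'n^'m" and U :: "real^'r^'m" and S :: "real^'r^'r" and V :: "real^'r^'n"
    and y :: "real^'m" and Pihat :: "real^'m^'m"
  assumes A_nz: "A \<noteq> 0"
    and rankA: "rank A = CARD('r)"
    and U_orth: "transpose U ** U = mat 1"
    and V_orth: "transpose V ** V = mat 1"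
    and S_diag: "\<forall>i j. i \<noteq> j \<longrightarrow> S $ i $ j = 0"
    and S_pos: "\<forall>i. S $ i $ i > 0"
    and svd: "A = U ** S ** transpose V"
    and y_nz: "y \<noteq> 0"
    and uniq: "Pihat \<in> permutation_matrices"
      "\<forall>P \<in> permutation_matrices. P \<noteq> Pihat \<longrightarrow>
          fobj U ((1 / norm y) *\<^sub>R y) Pihat < fobj U ((1 / norm y) *\<^sub>R y) P"
  shows "Pihat \<in> conv_perm \<and>
         (\<forall>B \<in> conv_perm. B \<noteq> Pihat \<longrightarrow>
            fobj U ((1 / norm y) *\<^sub>R y) Pihat < fobj U ((1 / norm y) *\<^sub>R y) B)"
proof -
  define L where "L = kron (rowmat ((1 / norm y) *\<^sub>R y)) (transpose U)"
  define g where "g B = (norm (L *v vecm B))\<^sup>2" for B :: "real^'m^'m"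
  have f_eq: "fobj U ((1 / norm y) *\<^sub>R y) B = - g B" for B
    unfolding fobj_def g_def L_def by simp
  have "linear (\<lambda>B. L *v vecm B)"
    using linear_compose[OF linear_vecm matrix_vector_mul_linear[of L]] by (simp add: o_def)
  then have "convex_on (convex hull permutation_matrices) g"
    unfolding g_def by (rule convex_on_subset[OF convex_on_power2_norm_linear]) simp_all
  then have "g B < g Pihat" if "B \<in> conv_perm" "B \<noteq> Pihat" for B
    using convex_on_convex_hull_less_unique_max[OF finite_permutation_matrices _ uniq(1)] uniq(2)
      that f_eq by (simp add: conv_perm_eq_convex_hull_permutation_matrices)
  with uniq(1) permutation_matrices_subset_conv_perm show ?thesis
    using f_eq by auto
qed

end
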